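(* Let $J^{bu}(x,y,q;z)=\sum_{\nu\in\mathcal{CP}^{bu}}x^{v(\nu)}y^{h(\nu)}q^{o(\nu)}z^{c(\nu)}$. Then $$J^{bu}(x,y,q;z)=\frac{q^4xy(1-q^2yz)}{(1-q^2yz)^2-q^2(1+qyz-q^2yz)^2x}.$$
   Context: A cell is a unit square in the plane whose center is an integer point and whose sides are parallel to the axes. A polyomino is a finite set of cells which is connected under edge-adjacency; polyominoes are considered up to translation. A column (resp. row) is the set of cells whose centers have a fixed $x$- (resp. $y$-) coordinate; a polyomino is convex if each column and each row is a contiguous block of cells. Number the columns $1,2,\dots$ from left to right; $u(\nu,j)$ and $b(\nu,j)$ denote the heights (center $y$-coordinates) of the top and bottom cells of column $j$. $\mathcal{CP}^{bu}$ is the set of nonempty convex polyominoes $\nu$ such that for all columns $j$ and all $s\ge j+1$, $u(\nu,s)\le u(\nu,j)$ and $b(\nu,s)\ge b(\nu,j)$. For $\nu$: $v(\nu)$ = number of columns, $h(\nu)$ = number of rows, $c(\nu)$ = number of cells in the first (leftmost) column minus $1$, and $o(\nu)$ (outer-site perimeter) = number of cells not in $\nu$ sharing a side with a cell of $\nu$. *)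

theory Defs
  imports "HOL-Analysis.Analysis"
begin

text \<open>Cells are identified with their centers (x,y) in Z x Z.\<close>
type_synonym cell = "int \<times> int"

definition adj :: "cell \<Rightarrow> cell \<Rightarrow> bool" where
  "adj a b \<longleftrightarrow> \<bar>fst a - fst b\<bar> + \<bar>snd a - snd b\<bar> = 1"

definition polyomino :: "cell set \<Rightarrow> bool" where
  "polyomino P \<longleftrightarrow> finite P \<and>
     (\<forall>a\<in>P. \<forall>b\<in>P. (a, b) \<in> {(c, d). c \<in> P \<and> d \<in> P \<and> adj c d}\<^sup>*)"

definition convex_poly :: "cell set \<Rightarrow> bool" where
  "convex_poly P \<longleftrightarrow>
     (\<forall>a\<in>P. \<forall>b\<in>P. fst a = fst b \<longrightarrow> (\<forall>t. min (snd a) (snd b) \<le> t \<and> t \<le> max (snd a) (snd b) \<longrightarrow> (fst a, t) \<in> P)) \<and>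
     (\<forall>a\<in>P. \<forall>b\<in>P. snd a = snd b \<longrightarrow> (\<forall>t. min (fst a) (fst b) \<le> t \<and> t \<le> max (fst a) (fst b) \<longrightarrow> (t, snd a) \<in> P))"

text \<open>Columns are numbered 1,2,... from left to right: column j has x-coordinate
  (leftmost x) + j - 1.\<close>
definition column :: "cell set \<Rightarrow> nat \<Rightarrow> cell set" where
  "column P j = {c \<in> P. fst c = Min (fst ` P) + int j - 1}"

definition utop :: "cell set \<Rightarrow> nat \<Rightarrow> int" where
  "utop P j = Max (snd ` column P j)"

definition bbot :: "cell set \<Rightarrow> nat \<Rightarrow> int" where
  "bbot P j = Min (snd ` column P j)"

definition vcols :: "cell set \<Rightarrow> nat" where
  "vcols P = card (fst ` P)"

definition hrows :: "cell set \<Rightarrow> nat" where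
  "hrows P = card (snd ` P)"

definition cfirst :: "cell set \<Rightarrow> nat" where
  "cfirst P = card (column P 1) - 1"

definition operim :: "cell set \<Rightarrow> nat" where
  "operim P = card {c. c \<notin> P \<and> (\<exists>d\<in>P. adj c d)}"

definition CPbu :: "cell set \<Rightarrow> bool" where
  "CPbu P \<longleftrightarrow> P \<noteq> {} \<and> polyomino P \<and> convex_poly P \<and>
     (\<forall>j s. 1 \<le> j \<and> j + 1 \<le> s \<and> s \<le> vcols P \<longrightarrow>
        utop P s \<le> utop P j \<and> bbot P s \<ge> bbot P j)"

text \<open>Polyominoes up to translation: we take the unique representative whose
  leftmost column has x = 0 and bottom row has y = 0.\<close>
definition normalized :: "cell set \<Rightarrow> bool" where
  "normalized P \<longleftrightarrow> Min (fst ` P) = 0 \<and> Min (snd ` P) = 0"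

definition CPbu_classes :: "cell set set" where
  "CPbu_classes = {P. CPbu P \<and> normalized P}"

end

theory Submission
  imports Defs
begin

(*
  A polyomino of CP^bu is determined by its sequence of column bottoms and tops, which are
  weakly increasing resp. decreasing.  It is therefore coded by the list of pairs (a_i, b_i)
  by which the top drops and the bottom rises from one column to the next, together with
  the number k such that the last column has k + 1 cells; the first column then has
  1 + sum a_i + sum b_i + k cells.  Every statistic is additive in this code: a step (a, b)
  costs x, lengthens the first column by a + b cells, each contributing y z and one left
  boundary cell q, and has max 1 a outer cells above and max 1 b below the new column.
  Summing over the a and the b separately gives S = q + q^2 y z / (1 - q^2 y z) each, and
  the series over lists of steps and over k are geometric, so the generating function is
    x q^4 y / ((1 - x S^2) (1 - q^2 y z)),
  where x q^4 y is the weight of the single cell; this simplifies to the stated rational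
  function.  All sums converge absolutely for small parameters, because the absolute value
  of a weight is the weight at the absolute values of the parameters.
*)

section \<open>Absolutely summable products and geometric series\<close>

lemma has_sum_SigmaI_norm:
  fixes f :: "'a \<times> 'b \<Rightarrow> 'c::banach"
  assumes "\<And>a. a \<in> A \<Longrightarrow> ((\<lambda>b. f (a, b)) has_sum g a) (B a)"
    and "(g has_sum s) A"
    and "\<And>a. a \<in> A \<Longrightarrow> ((\<lambda>b. norm (f (a, b))) has_sum g' a) (B a)"
    and "g' summable_on A"
  shows "(f has_sum s) (Sigma A B)"
proof -
  have "(\<lambda>p. norm (f p)) summable_on Sigma A B"
    by (rule summable_on_SigmaI[where g = g']) (use assms(3,4) in auto)
  then have "f summable_on Sigma A B"
    by (rule abs_summable_summable)
  with assms(1,2) show ?thesis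
    by (rule has_sum_SigmaI)
qed

lemma has_sum_Times_mult:
  fixes f g :: "_ \<Rightarrow> 'c::{real_normed_div_algebra, banach}"
  assumes "(f has_sum F) A" "(g has_sum G) B"
    and "((\<lambda>a. norm (f a)) has_sum F') A" "((\<lambda>b. norm (g b)) has_sum G') B"
  shows "((\<lambda>(a, b). f a * g b) has_sum F * G) (A \<times> B)"
proof (rule has_sum_SigmaI_norm)
  show "((\<lambda>b. case (a, b) of (a, b) \<Rightarrow> f a * g b) has_sum f a * G) B" for a
    using has_sum_cmult_right[OF assms(2)] by simp
  show "((\<lambda>a. f a * G) has_sum F * G) A"
    using has_sum_cmult_left[OF assms(1)] .
  show "((\<lambda>b. norm (case (a, b) of (a, b) \<Rightarrow> f a * g b)) has_sum norm (f a) * G') B" for a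
    using has_sum_cmult_right[OF assms(4)] by (simp add: norm_mult)
  show "(\<lambda>a. norm (f a) * G') summable_on A"
    using has_sum_cmult_left[OF assms(3)] by (rule has_sum_imp_summable)
qed

lemma has_sum_geometric:
  fixes z :: "'a::{real_normed_field, banach}"
  assumes "norm z < 1"
  shows "((\<lambda>n. z ^ n) has_sum 1 / (1 - z)) UNIV"
proof (rule norm_summable_imp_has_sum)
  show "summable (\<lambda>n. norm (z ^ n))"
    using assms by (simp add: norm_power summable_geometric)
  show "(\<lambda>n. z ^ n) sums (1 / (1 - z))"
    using geometric_sums[OF assms] by simp
qed

lemma lists_length_Suc_eq_Cons_image:
  "{xs \<in> lists A. length xs = Suc m} = (\<lambda>(a, xs). a # xs) ` (A \<times> {xs \<in> lists A. length xs = m})"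
  by (auto simp: length_Suc_conv image_iff)

lemma abs_prod_list: "\<bar>prod_list (map g xs)\<bar> = prod_list (map (\<lambda>a. \<bar>g a\<bar>) xs)" for g :: "_ \<Rightarrow> real"
  by (induction xs) (simp_all add: abs_mult)

lemma has_sum_prod_list_length:
  fixes g :: "_ \<Rightarrow> real"
  assumes "(g has_sum G) A" "((\<lambda>a. \<bar>g a\<bar>) has_sum G') A"
  shows "((\<lambda>xs. prod_list (map g xs)) has_sum G ^ m) {xs \<in> lists A. length xs = m}"
  using assms
proof (induction m arbitrary: g G G')
  case 0
  have "{xs \<in> lists A. length xs = 0} = {[]}" by auto
  then show ?case
    using has_sum_finite[of "{[]}" "\<lambda>xs. prod_list (map g xs)"] by simp
next
  case (Suc m)
  have "((\<lambda>(a, xs). g a * prod_list (map g xs)) has_sum G * G ^ m)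
      (A \<times> {xs \<in> lists A. length xs = m})"
  proof (rule has_sum_Times_mult)
    show "((\<lambda>xs. prod_list (map g xs)) has_sum G ^ m) {xs \<in> lists A. length xs = m}"
      using Suc by blast
    show "((\<lambda>xs. norm (prod_list (map g xs))) has_sum G' ^ m) {xs \<in> lists A. length xs = m}"
      using Suc.IH[of "\<lambda>a. \<bar>g a\<bar>" G' G'] Suc.prems(2) by (simp add: abs_prod_list)
  qed (use Suc.prems in auto)
  moreover have "inj_on (\<lambda>(a, xs). a # xs) (A \<times> {xs \<in> lists A. length xs = m})"
    by (auto simp: inj_on_def)
  ultimately show ?case
    by (simp add: lists_length_Suc_eq_Cons_image has_sum_reindex o_def case_prod_unfold)
qed

lemma has_sum_prod_list:
  fixes g :: "_ \<Rightarrow> real"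
  assumes g: "(g has_sum G) A" and g_abs: "((\<lambda>a. \<bar>g a\<bar>) has_sum G') A" and "G' < 1"
  shows "((\<lambda>xs. prod_list (map g xs)) has_sum 1 / (1 - G)) (lists A)"
proof -
  have "\<bar>G\<bar> \<le> G'"
    using norm_infsum_le[OF g g_abs] by simp
  then have "((\<lambda>(m, xs). prod_list (map g xs)) has_sum 1 / (1 - G))
      (Sigma UNIV (\<lambda>m. {xs \<in> lists A. length xs = m}))"
  proof (intro has_sum_SigmaI_norm)
    show "((\<lambda>m. G ^ m) has_sum 1 / (1 - G)) UNIV"
      using \<open>\<bar>G\<bar> \<le> G'\<close> \<open>G' < 1\<close> by (intro has_sum_geometric) simp
    show "(\<lambda>m. G' ^ m) summable_on UNIV"
      using \<open>\<bar>G\<bar> \<le> G'\<close> \<open>G' < 1\<close> has_sum_geometric[of G'] has_sum_imp_summable by fastforce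
    show "((\<lambda>xs. case (m, xs) of (m, xs) \<Rightarrow> prod_list (map g xs)) has_sum G ^ m)
        {xs \<in> lists A. length xs = m}" for m
      using has_sum_prod_list_length[OF g g_abs] by simp
    have "((\<lambda>xs. prod_list (map (\<lambda>a. \<bar>g a\<bar>) xs)) has_sum G' ^ m)
        {xs \<in> lists A. length xs = m}" for m
      using has_sum_prod_list_length[OF g_abs] g_abs by simp
    then show "((\<lambda>xs. norm (case (m, xs) of (m, xs) \<Rightarrow> prod_list (map g xs))) has_sum G' ^ m)
        {xs \<in> lists A. length xs = m}" for m
      by (simp add: abs_prod_list)
  qed
  moreover have "bij_betw snd (Sigma UNIV (\<lambda>m. {xs \<in> lists A. length xs = m})) (lists A)"
    by (auto simp: bij_betw_def inj_on_def image_iff)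
  ultimately show ?thesis
    by (subst has_sum_reindex_bij_betw[symmetric]) (simp_all add: case_prod_unfold)
qed

abbreviation adj_within :: "cell set \<Rightarrow> (cell \<times> cell) set" where
  "adj_within S \<equiv> {(c, d). c \<in> S \<and> d \<in> S \<and> adj c d}"

lemma sym_adj_within: "sym (adj_within S)"
  by (auto simp: sym_def adj_def abs_minus_commute)

lemma bex_adj_iff:
  "(\<exists>d\<in>S. adj (a, b) d) \<longleftrightarrow> (a + 1, b) \<in> S \<or> (a - 1, b) \<in> S \<or> (a, b + 1) \<in> S \<or> (a, b - 1) \<in> S"
proof -
  have "adj (a, b) d \<longleftrightarrow> d = (a + 1, b) \<or> d = (a - 1, b) \<or> d = (a, b + 1) \<or> d = (a, b - 1)" for d
    by (cases d) (auto simp: adj_def)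
  then show ?thesis
    by auto
qed

lemma rtrancl_adj_fst_between:
  assumes "(c, d) \<in> (adj_within P)\<^sup>*" "c \<in> P"
    and "min (fst c) (fst d) \<le> t" "t \<le> max (fst c) (fst d)"
  shows "t \<in> fst ` P"
  using assms(1,3,4)
proof (induction arbitrary: t rule: rtrancl_induct)
  case base
  then have "t = fst c"
    by simp
  then show ?case
    using assms(2) by blast
next
  case (step d e)
  then have "e \<in> P" "\<bar>fst d - fst e\<bar> \<le> 1"
    by (auto simp: adj_def)
  show ?case
  proof (cases "t = fst e")
    case True
    then show ?thesis
      using \<open>e \<in> P\<close> by force
  next
    case False
    then have "min (fst c) (fst d) \<le> t \<and> t \<le> max (fst c) (fst d)"
      using step.prems \<open>\<bar>fst d - fst e\<bar> \<le> 1\<close> by linarith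
    then show ?thesis
      using step.IH by blast
  qed
qed

lemma fst_image_polyomino:
  assumes "polyomino P" "P \<noteq> {}" "Min (fst ` P) = 0"
  shows "fst ` P = {0..<int (vcols P)}"
proof -
  have "finite P"
    using assms(1) by (simp add: polyomino_def)
  then have fin: "finite (fst ` P)" "fst ` P \<noteq> {}"
    using assms(2) by auto
  define m where "m = Max (fst ` P)"
  obtain c where "c \<in> P" "fst c = 0"
    using Min_in[OF fin] assms(3) by (metis imageE)
  obtain d where "d \<in> P" "fst d = m"
    using Max_in[OF fin] unfolding m_def by (metis imageE)
  have "fst ` P = {0..m}"
  proof (intro antisym subsetI)
    fix t assume "t \<in> fst ` P"
    then show "t \<in> {0..m}"
      using Min_le[OF fin(1)] Max_ge[OF fin(1)] assms(3) unfolding m_def by fastforce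
  next
    fix t assume "t \<in> {0..m}"
    moreover have "(c, d) \<in> (adj_within P)\<^sup>*"
      using assms(1) \<open>c \<in> P\<close> \<open>d \<in> P\<close> unfolding polyomino_def by blast
    ultimately show "t \<in> fst ` P"
      using rtrancl_adj_fst_between[of c d P t] \<open>c \<in> P\<close> \<open>fst c = 0\<close> \<open>fst d = m\<close> by simp
  qed
  moreover from this have "0 \<le> m"
    using fin(2) by auto
  ultimately show ?thesis
    by (auto simp: vcols_def)
qed

section \<open>Polyominoes given by column profiles\<close>

text \<open>The columns of \<open>colpoly v lo hi\<close> are numbered from \<open>0\<close>: its column \<open>i\<close> is column \<open>Suc i\<close>
  in the numbering of \<open>column\<close>, \<open>utop\<close> and \<open>bbot\<close>.\<close>

definition colpoly :: "nat \<Rightarrow> (nat \<Rightarrow> int) \<Rightarrow> (nat \<Rightarrow> int) \<Rightarrow> cell set" where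
  "colpoly v lo hi = {(a, b). 0 \<le> a \<and> a < int v \<and> lo (nat a) \<le> b \<and> b \<le> hi (nat a)}"

definition bu_profile :: "nat \<Rightarrow> (nat \<Rightarrow> int) \<Rightarrow> (nat \<Rightarrow> int) \<Rightarrow> bool" where
  "bu_profile v lo hi \<longleftrightarrow> 0 < v \<and> lo 0 = 0 \<and> lo (v - 1) \<le> hi (v - 1) \<and>
     (\<forall>i. Suc i < v \<longrightarrow> lo i \<le> lo (Suc i) \<and> hi (Suc i) \<le> hi i)"

lemma mem_colpoly [simp]:
  "(a, b) \<in> colpoly v lo hi \<longleftrightarrow> 0 \<le> a \<and> a < int v \<and> lo (nat a) \<le> b \<and> b \<le> hi (nat a)"
  by (simp add: colpoly_def)

lemma bu_profile_mono:
  assumes "bu_profile v lo hi" "i \<le> j" "j < v"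
  shows "lo i \<le> lo j \<and> hi j \<le> hi i"
  using assms(2,3)
proof (induction j rule: dec_induct)
  case (step n)
  then show ?case
    using assms(1) unfolding bu_profile_def by (meson Suc_lessD order_trans)
qed simp

lemma bu_profile_bounds:
  assumes "bu_profile v lo hi" "i < v"
  shows "0 \<le> lo i \<and> lo i \<le> hi i \<and> hi i \<le> hi 0"
proof -
  have "lo 0 \<le> lo i \<and> hi i \<le> hi 0" "lo i \<le> lo (v - 1) \<and> hi (v - 1) \<le> hi i"
    using bu_profile_mono[OF assms(1)] assms(2) by auto
  then show ?thesis
    using assms(1) by (auto simp: bu_profile_def)
qed

lemma colpoly_eq_image_Sigma:
  "colpoly v lo hi = (\<lambda>(x, b). (int x, b)) ` (SIGMA x:{..<v}. {lo x..hi x})"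
  by (force simp: colpoly_def image_iff)

lemma finite_colpoly: "finite (colpoly v lo hi)"
  by (simp add: colpoly_eq_image_Sigma)

lemma card_colpoly: "card (colpoly v lo hi) = (\<Sum>x<v. nat (hi x - lo x + 1))"
proof -
  have "inj_on (\<lambda>(x::nat, b::int). (int x, b)) (SIGMA x:{..<v}. {lo x..hi x})"
    by (auto simp: inj_on_def)
  then show ?thesis
    by (simp add: colpoly_eq_image_Sigma card_image card_SigmaI)
qed

lemma colpoly_cong:
  assumes "\<And>i. i < v \<Longrightarrow> lo i = lo' i \<and> hi i = hi' i"
  shows "colpoly v lo hi = colpoly v lo' hi'"
  using assms by (force simp: colpoly_def nat_less_iff)

context
  fixes v lo hi
  assumes profile: "bu_profile v lo hi"
begin

lemma fst_image_colpoly: "fst ` colpoly v lo hi = {0..<int v}"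
proof (rule set_eqI, rule iffI)
  fix a assume "a \<in> {0..<int v}"
  then have "(a, lo (nat a)) \<in> colpoly v lo hi"
    using bu_profile_bounds[OF profile, of "nat a"] by auto
  then show "a \<in> fst ` colpoly v lo hi"
    by (metis fst_conv image_eqI)
qed (auto simp: colpoly_def)

lemma snd_image_colpoly: "snd ` colpoly v lo hi = {0..hi 0}"
proof (rule set_eqI, rule iffI)
  fix b assume "b \<in> snd ` colpoly v lo hi"
  then obtain a where "(a, b) \<in> colpoly v lo hi" by force
  then show "b \<in> {0..hi 0}"
    using bu_profile_bounds[OF profile, of "nat a"] by (auto simp: nat_less_iff)
next
  fix b assume "b \<in> {0..hi 0}"
  then have "(0, b) \<in> colpoly v lo hi"
    using profile by (auto simp: bu_profile_def)
  then show "b \<in> snd ` colpoly v lo hi"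
    by (metis snd_conv image_eqI)
qed

lemma Min_fst_colpoly: "Min (fst ` colpoly v lo hi) = 0"
  using profile by (simp add: fst_image_colpoly bu_profile_def) (rule Min_eqI, auto)

lemma vcols_colpoly: "vcols (colpoly v lo hi) = v"
  by (simp add: vcols_def fst_image_colpoly)

lemma hrows_colpoly: "hrows (colpoly v lo hi) = nat (hi 0 + 1)"
  by (simp add: hrows_def snd_image_colpoly)

lemma normalized_colpoly: "normalized (colpoly v lo hi)"
  using bu_profile_bounds[OF profile, of 0] profile unfolding bu_profile_def
  by (simp add: normalized_def Min_fst_colpoly snd_image_colpoly) (rule Min_eqI, auto)

lemma snd_image_column_colpoly:
  assumes "i < v"
  shows "snd ` column (colpoly v lo hi) (Suc i) = {lo i..hi i}"
proof -
  have "column (colpoly v lo hi) (Suc i) = (\<lambda>b. (int i, b)) ` {lo i..hi i}"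
    using assms by (auto simp: column_def Min_fst_colpoly image_iff)
  then show ?thesis
    by (simp add: image_image)
qed

lemma utop_colpoly: "i < v \<Longrightarrow> utop (colpoly v lo hi) (Suc i) = hi i"
  using bu_profile_bounds[OF profile]
  by (simp add: utop_def snd_image_column_colpoly) (rule Max_eqI, auto)

lemma bbot_colpoly: "i < v \<Longrightarrow> bbot (colpoly v lo hi) (Suc i) = lo i"
  using bu_profile_bounds[OF profile]
  by (simp add: bbot_def snd_image_column_colpoly) (rule Min_eqI, auto)

lemma cfirst_colpoly: "cfirst (colpoly v lo hi) = nat (hi 0)"
proof -
  have "card (column (colpoly v lo hi) 1) = card (snd ` column (colpoly v lo hi) 1)"
    by (rule card_image[symmetric]) (auto simp: column_def inj_on_def prod_eq_iff)
  then show ?thesis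
    using snd_image_column_colpoly[of 0] profile bu_profile_bounds[OF profile, of 0]
    by (simp add: cfirst_def bu_profile_def)
qed

lemma convex_colpoly: "convex_poly (colpoly v lo hi)"
  unfolding convex_poly_def
proof (intro conjI ballI allI impI)
  fix c d :: cell and t
  assume "c \<in> colpoly v lo hi" "d \<in> colpoly v lo hi" "fst c = fst d"
    "min (snd c) (snd d) \<le> t \<and> t \<le> max (snd c) (snd d)"
  then show "(fst c, t) \<in> colpoly v lo hi"
    by (auto simp: colpoly_def)
next
  fix c d :: cell and t
  assume c: "c \<in> colpoly v lo hi" and d: "d \<in> colpoly v lo hi" and "snd c = snd d"
    and t: "min (fst c) (fst d) \<le> t \<and> t \<le> max (fst c) (fst d)"
  define m where "m = max (fst c) (fst d)"
  have m: "(m, snd c) \<in> colpoly v lo hi"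
    using c d \<open>snd c = snd d\<close> by (cases "fst c \<le> fst d") (auto simp: m_def colpoly_def)
  have "0 \<le> t" "t \<le> m"
    using c d t by (auto simp: colpoly_def m_def)
  then have "lo (nat t) \<le> lo (nat m) \<and> hi (nat m) \<le> hi (nat t)"
    using bu_profile_mono[OF profile, of "nat t" "nat m"] m by (auto simp: nat_mono)
  then show "(t, snd c) \<in> colpoly v lo hi"
    using m \<open>0 \<le> t\<close> \<open>t \<le> m\<close> by auto
qed

lemma colpoly_path_up:
  "(0, int n) \<in> colpoly v lo hi \<Longrightarrow> ((0, 0), (0, int n)) \<in> (adj_within (colpoly v lo hi))\<^sup>*"
proof (induction n)
  case (Suc n)
  then have "(0, int n) \<in> colpoly v lo hi"
    using profile by (auto simp: bu_profile_def)
  with Suc show ?case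
    by (auto simp: adj_def intro: rtrancl_into_rtrancl)
qed simp

lemma colpoly_path_right:
  "(int m, b) \<in> colpoly v lo hi \<Longrightarrow> ((0, b), (int m, b)) \<in> (adj_within (colpoly v lo hi))\<^sup>*"
proof (induction m)
  case (Suc m)
  have "Suc m < v" "lo (Suc m) \<le> b" "b \<le> hi (Suc m)"
    using Suc.prems unfolding mem_colpoly nat_int by simp_all
  then have "(int m, b) \<in> colpoly v lo hi"
    using profile by (auto simp: bu_profile_def)
  with Suc show ?case
    by (auto simp: adj_def intro: rtrancl_into_rtrancl)
qed simp

lemma colpoly_path_from_origin:
  assumes "c \<in> colpoly v lo hi"
  shows "((0, 0), c) \<in> (adj_within (colpoly v lo hi))\<^sup>*"
proof -
  obtain a b where c: "c = (a, b)" by force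
  then have "0 \<le> a" "nat a < v" "0 \<le> b \<and> b \<le> hi 0"
    using assms bu_profile_bounds[OF profile, of "nat a"] by (auto simp: nat_less_iff)
  moreover from this have "(0, b) \<in> colpoly v lo hi"
    using profile by (auto simp: bu_profile_def)
  ultimately show ?thesis
    using colpoly_path_up[of "nat b"] colpoly_path_right[of "nat a" b]
      assms c by (auto intro: rtrancl_trans)
qed

lemma connected_colpoly:
  "c \<in> colpoly v lo hi \<Longrightarrow> d \<in> colpoly v lo hi \<Longrightarrow> (c, d) \<in> (adj_within (colpoly v lo hi))\<^sup>*"
  using colpoly_path_from_origin sym_rtrancl[OF sym_adj_within] by (meson rtrancl_trans symD)

lemma colpoly_in_CPbu_classes: "colpoly v lo hi \<in> CPbu_classes"
proof -
  have "colpoly v lo hi \<noteq> {}"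
    using fst_image_colpoly profile by (auto simp: bu_profile_def)
  moreover have "polyomino (colpoly v lo hi)"
    using finite_colpoly connected_colpoly by (simp add: polyomino_def)
  moreover have "utop (colpoly v lo hi) s \<le> utop (colpoly v lo hi) j \<and>
      bbot (colpoly v lo hi) j \<le> bbot (colpoly v lo hi) s"
    if "1 \<le> j" "j + 1 \<le> s" "s \<le> v" for j s
    using that bu_profile_mono[OF profile, of "j - 1" "s - 1"]
      utop_colpoly[of "j - 1"] utop_colpoly[of "s - 1"]
      bbot_colpoly[of "j - 1"] bbot_colpoly[of "s - 1"]
    by simp
  ultimately show ?thesis
    using convex_colpoly normalized_colpoly vcols_colpoly by (simp add: CPbu_classes_def CPbu_def)
qed

text \<open>Since \<open>x - 1\<close> is truncated at \<open>0\<close>, column \<open>0\<close> serves as its own left neighbour;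
  this accounts for the single outer cell above and below the first column.\<close>

lemma outer_cell_in_column:
  assumes "x < v"
  shows "(int x, b) \<notin> colpoly v lo hi \<and> (\<exists>d\<in>colpoly v lo hi. adj (int x, b) d) \<longleftrightarrow>
    hi x + 1 \<le> b \<and> b \<le> max (hi x + 1) (hi (x - 1)) \<or> min (lo x - 1) (lo (x - 1)) \<le> b \<and> b \<le> lo x - 1"
proof -
  have left: "(int x - 1, b) \<in> colpoly v lo hi \<longleftrightarrow> 0 < x \<and> lo (x - 1) \<le> b \<and> b \<le> hi (x - 1)"
    using assms by (cases x) auto
  have right: "(int x + 1, b) \<in> colpoly v lo hi \<longleftrightarrow> Suc x < v \<and> lo (Suc x) \<le> b \<and> b \<le> hi (Suc x)"
    by (simp add: nat_add_distrib) linarith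
  have "lo x \<le> hi x" "lo (x - 1) \<le> lo x" "hi x \<le> hi (x - 1)"
    using bu_profile_bounds[OF profile assms]
      bu_profile_mono[OF profile, of "x - 1" x] assms by auto
  moreover have "Suc x < v \<Longrightarrow> lo x \<le> lo (Suc x) \<and> hi (Suc x) \<le> hi x"
    using profile by (simp add: bu_profile_def)
  moreover have "\<not> 0 < x \<Longrightarrow> lo (x - 1) = lo x \<and> hi (x - 1) = hi x"
    by simp
  ultimately show ?thesis
    unfolding bex_adj_iff left right using assms by auto
qed

lemma outer_cell_off_columns:
  assumes "\<not> (0 \<le> a \<and> a < int v)"
  shows "(a, b) \<notin> colpoly v lo hi \<and> (\<exists>d\<in>colpoly v lo hi. adj (a, b) d) \<longleftrightarrow>
    a = -1 \<and> 0 \<le> b \<and> b \<le> hi 0 \<or> a = int v \<and> lo (v - 1) \<le> b \<and> b \<le> hi (v - 1)"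
proof -
  have "0 < v" "lo 0 = 0"
    using profile by (auto simp: bu_profile_def)
  have "(a, b') \<notin> colpoly v lo hi" for b'
    using assms by auto
  moreover have "(a + 1, b) \<in> colpoly v lo hi \<longleftrightarrow> a = -1 \<and> 0 \<le> b \<and> b \<le> hi 0"
    using assms \<open>0 < v\<close> \<open>lo 0 = 0\<close> by auto
  moreover have "(a - 1, b) \<in> colpoly v lo hi \<longleftrightarrow> a = int v \<and> lo (v - 1) \<le> b \<and> b \<le> hi (v - 1)"
  proof (cases "a = int v")
    case True
    moreover have "nat (int v - 1) = v - 1"
      by arith
    ultimately show ?thesis
      using \<open>0 < v\<close> by simp
  qed (use assms in auto)
  ultimately show ?thesis
    unfolding bex_adj_iff by blast
qed

lemma outer_boundary_colpoly:
  "{c. c \<notin> colpoly v lo hi \<and> (\<exists>d\<in>colpoly v lo hi. adj c d)} =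
     ({-1} \<times> {0..hi 0}) \<union> ({int v} \<times> {lo (v - 1)..hi (v - 1)}) \<union>
     colpoly v (\<lambda>x. hi x + 1) (\<lambda>x. max (hi x + 1) (hi (x - 1))) \<union>
     colpoly v (\<lambda>x. min (lo x - 1) (lo (x - 1))) (\<lambda>x. lo x - 1)"
proof (rule set_eqI)
  fix c :: cell
  obtain a b where c: "c = (a, b)" by force
  show "c \<in> {c. c \<notin> colpoly v lo hi \<and> (\<exists>d\<in>colpoly v lo hi. adj c d)} \<longleftrightarrow>
    c \<in> ({-1} \<times> {0..hi 0}) \<union> ({int v} \<times> {lo (v - 1)..hi (v - 1)}) \<union>
     colpoly v (\<lambda>x. hi x + 1) (\<lambda>x. max (hi x + 1) (hi (x - 1))) \<union>
     colpoly v (\<lambda>x. min (lo x - 1) (lo (x - 1))) (\<lambda>x. lo x - 1)"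
  proof (cases "0 \<le> a \<and> a < int v")
    case True
    define x where "x = nat a"
    have "a = int x" "x < v"
      using True by (auto simp: x_def)
    then show ?thesis
      using outer_cell_in_column[of x b] by (simp add: c)
  next
    case False
    then show ?thesis
      using outer_cell_off_columns[of a b] by (auto simp: c)
  qed
qed

lemma operim_colpoly:
  "int (operim (colpoly v lo hi)) = (hi 0 + 1) + (hi (v - 1) - lo (v - 1) + 1) +
     (\<Sum>x<v. max 1 (hi (x - 1) - hi x)) + (\<Sum>x<v. max 1 (lo x - lo (x - 1)))"
proof -
  define L where "L = {-1::int} \<times> {0..hi 0}"
  define R where "R = {int v} \<times> {lo (v - 1)..hi (v - 1)}"
  define T where "T = colpoly v (\<lambda>x. hi x + 1) (\<lambda>x. max (hi x + 1) (hi (x - 1)))"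
  define B where "B = colpoly v (\<lambda>x. min (lo x - 1) (lo (x - 1))) (\<lambda>x. lo x - 1)"
  have "T \<inter> B = {}"
  proof (rule equals0I)
    fix c assume "c \<in> T \<inter> B"
    moreover obtain a b where "c = (a, b)" by force
    ultimately have "nat a < v" "hi (nat a) < b" "b < lo (nat a)"
      by (auto simp: T_def B_def nat_less_iff)
    then show False
      using bu_profile_bounds[OF profile] by force
  qed
  have "card (L \<union> R \<union> T \<union> B) = card L + card R + card T + card B"
  proof -
    have "card ((L \<union> R) \<union> (T \<union> B)) = card (L \<union> R) + card (T \<union> B)"
      by (rule card_Un_disjoint) (auto simp: L_def R_def T_def B_def finite_colpoly)
    also have "card (L \<union> R) = card L + card R"
      by (rule card_Un_disjoint) (auto simp: L_def R_def)
    also have "card (T \<union> B) = card T + card B"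
      by (rule card_Un_disjoint[OF _ _ \<open>T \<inter> B = {}\<close>]) (simp_all add: T_def B_def finite_colpoly)
    finally show ?thesis
      by (simp add: Un_assoc)
  qed
  moreover have "int (card T) = (\<Sum>x<v. max 1 (hi (x - 1) - hi x))"
    unfolding T_def card_colpoly of_nat_sum by (rule sum.cong) auto
  moreover have "int (card B) = (\<Sum>x<v. max 1 (lo x - lo (x - 1)))"
    unfolding B_def card_colpoly of_nat_sum by (rule sum.cong) auto
  moreover have "0 \<le> hi 0" "lo (v - 1) \<le> hi (v - 1)"
    using profile bu_profile_bounds[OF profile, of 0] by (auto simp: bu_profile_def)
  ultimately show ?thesis
    unfolding operim_def outer_boundary_colpoly
    by (simp add: L_def R_def T_def B_def card_cartesian_product)
qed

end

section \<open>Normalized polyominoes of CP^bu are column profiles\<close>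

context
  fixes P :: "cell set"
  assumes P: "P \<in> CPbu_classes"
begin

lemma CPbu_classes_fst_image: "fst ` P = {0..<int (vcols P)}"
  using P fst_image_polyomino by (auto simp: CPbu_classes_def CPbu_def normalized_def)

lemma CPbu_classes_column: "column P (Suc i) = {c \<in> P. fst c = int i}"
  using P by (simp add: CPbu_classes_def normalized_def column_def)

lemma CPbu_classes_finite_snd_column: "finite (snd ` column P (Suc i))"
  using P by (simp add: CPbu_classes_column CPbu_classes_def CPbu_def polyomino_def)

lemma CPbu_classes_snd_column_nonempty:
  assumes "i < vcols P"
  shows "snd ` column P (Suc i) \<noteq> {}"
proof -
  have "int i \<in> fst ` P"
    using assms by (simp add: CPbu_classes_fst_image)
  then show ?thesis
    by (force simp: CPbu_classes_column)
qed

lemma CPbu_classes_between_bbot_utop: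
  assumes "c \<in> P"
  shows "bbot P (Suc (nat (fst c))) \<le> snd c \<and> snd c \<le> utop P (Suc (nat (fst c)))"
proof -
  have "0 \<le> fst c"
    using assms CPbu_classes_fst_image by force
  then have "snd c \<in> snd ` column P (Suc (nat (fst c)))"
    using assms by (simp add: CPbu_classes_column)
  then show ?thesis
    using CPbu_classes_finite_snd_column by (simp add: bbot_def utop_def)
qed

lemma CPbu_classes_eq_colpoly:
  "P = colpoly (vcols P) (\<lambda>i. bbot P (Suc i)) (\<lambda>i. utop P (Suc i))"
proof (intro antisym subsetI)
  fix c assume "c \<in> P"
  then show "c \<in> colpoly (vcols P) (\<lambda>i. bbot P (Suc i)) (\<lambda>i. utop P (Suc i))"
    using CPbu_classes_between_bbot_utop[of c] CPbu_classes_fst_image by (force simp: colpoly_def)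
next
  fix c assume c: "c \<in> colpoly (vcols P) (\<lambda>i. bbot P (Suc i)) (\<lambda>i. utop P (Suc i))"
  obtain a b where ab: "c = (a, b)" by force
  define i where "i = nat a"
  have i: "a = int i" "i < vcols P" "bbot P (Suc i) \<le> b" "b \<le> utop P (Suc i)"
    using c by (auto simp: ab i_def)
  obtain d where d: "d \<in> P" "fst d = int i" "snd d = bbot P (Suc i)"
    using Min_in[OF CPbu_classes_finite_snd_column CPbu_classes_snd_column_nonempty[of i]] i(2)
    by (auto simp: bbot_def CPbu_classes_column)
  obtain e where e: "e \<in> P" "fst e = int i" "snd e = utop P (Suc i)"
    using Max_in[OF CPbu_classes_finite_snd_column CPbu_classes_snd_column_nonempty[of i]] i(2)
    by (auto simp: utop_def CPbu_classes_column)
  have "\<forall>d\<in>P. \<forall>e\<in>P. fst d = fst e \<longrightarrow>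
      (\<forall>t. min (snd d) (snd e) \<le> t \<and> t \<le> max (snd d) (snd e) \<longrightarrow> (fst d, t) \<in> P)"
    using P by (simp add: CPbu_classes_def CPbu_def convex_poly_def)
  moreover have "min (snd d) (snd e) \<le> b \<and> b \<le> max (snd d) (snd e)"
    using d(3) e(3) i(3,4) by simp
  moreover have "fst d = fst e"
    using d(2) e(2) by simp
  ultimately have "(fst d, b) \<in> P"
    using d(1) e(1) by blast
  then show "c \<in> P"
    using d(2) i(1) ab by simp
qed

lemma bu_profile_CPbu_classes:
  "bu_profile (vcols P) (\<lambda>i. bbot P (Suc i)) (\<lambda>i. utop P (Suc i))"
proof -
  let ?lo = "\<lambda>i. bbot P (Suc i)" and ?hi = "\<lambda>i. utop P (Suc i)"
  have "P \<noteq> {}" "finite P" "Min (snd ` P) = 0"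
    using P by (simp_all add: CPbu_classes_def CPbu_def normalized_def polyomino_def)
  then have "0 < vcols P"
    using CPbu_classes_fst_image by fastforce
  have mono: "?lo i \<le> ?lo j \<and> ?hi j \<le> ?hi i" if "i \<le> j" "j < vcols P" for i j
    using P that by (cases "i = j") (auto simp: CPbu_classes_def CPbu_def)
  have "?lo i \<le> ?hi i" if "i < vcols P" for i
    using Min_in[OF CPbu_classes_finite_snd_column CPbu_classes_snd_column_nonempty[of i]]
      Max_ge[OF CPbu_classes_finite_snd_column] that
    by (simp add: bbot_def utop_def)
  from this[of "vcols P - 1"] have "?lo (vcols P - 1) \<le> ?hi (vcols P - 1)"
    using \<open>0 < vcols P\<close> by simp
  moreover have "?lo 0 = 0"
  proof (rule antisym)
    obtain c where c: "c \<in> P" "snd c = 0"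
      using Min_in[of "snd ` P"] \<open>P \<noteq> {}\<close> \<open>finite P\<close> \<open>Min (snd ` P) = 0\<close>
        by (metis finite_imageI image_is_empty imageE)
    have "fst c \<in> fst ` P"
      using c(1) by (rule imageI)
    then have "nat (fst c) < vcols P"
      unfolding CPbu_classes_fst_image by auto
    then show "?lo 0 \<le> 0"
      using mono[of 0 "nat (fst c)"] CPbu_classes_between_bbot_utop[OF c(1)] c(2) by simp
    have "?lo 0 \<in> snd ` P"
      using Min_in[OF CPbu_classes_finite_snd_column
        CPbu_classes_snd_column_nonempty[OF \<open>0 < vcols P\<close>]]
      by (auto simp: bbot_def CPbu_classes_column)
    then show "0 \<le> ?lo 0"
      using Min_le[of "snd ` P"] \<open>finite P\<close> \<open>Min (snd ` P) = 0\<close> by fastforce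
  qed
  ultimately show ?thesis
    using \<open>0 < vcols P\<close> mono by (simp add: bu_profile_def)
qed

end

section \<open>Coding by lists of steps\<close>

text \<open>In a code \<open>(ps, k)\<close> the \<open>i\<close>-th pair of \<open>ps\<close> gives the drop of the top and the rise
  of the bottom from column \<open>i\<close> to column \<open>i + 1\<close>, and the last column has \<open>k + 1\<close> cells.\<close>

definition code_lo :: "(nat \<times> nat) list \<Rightarrow> nat \<Rightarrow> int" where
  "code_lo ps i = int (sum_list (take i (map snd ps)))"

definition code_hi :: "(nat \<times> nat) list \<Rightarrow> nat \<Rightarrow> nat \<Rightarrow> int" where
  "code_hi ps k i =
     int (sum_list (map fst ps) + sum_list (map snd ps) + k) - int (sum_list (take i (map fst ps)))"

definition poly_of_code :: "(nat \<times> nat) list \<times> nat \<Rightarrow> cell set" where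
  "poly_of_code = (\<lambda>(ps, k). colpoly (Suc (length ps)) (code_lo ps) (code_hi ps k))"

definition code_of_profile :: "nat \<Rightarrow> (nat \<Rightarrow> int) \<Rightarrow> (nat \<Rightarrow> int) \<Rightarrow> (nat \<times> nat) list \<times> nat" where
  "code_of_profile v lo hi =
     (map (\<lambda>i. (nat (hi i - hi (Suc i)), nat (lo (Suc i) - lo i))) [0..<v - 1],
      nat (hi (v - 1) - lo (v - 1)))"

definition code_of_poly :: "cell set \<Rightarrow> (nat \<times> nat) list \<times> nat" where
  "code_of_poly P = code_of_profile (vcols P) (\<lambda>i. bbot P (Suc i)) (\<lambda>i. utop P (Suc i))"

lemma code_lo_0 [simp]: "code_lo ps 0 = 0"
  by (simp add: code_lo_def)

lemma code_hi_0 [simp]: "code_hi ps k 0 = int (sum_list (map fst ps) + sum_list (map snd ps) + k)"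
  by (simp add: code_hi_def)

lemma code_lo_Suc: "i < length ps \<Longrightarrow> code_lo ps (Suc i) = code_lo ps i + int (snd (ps ! i))"
  by (simp add: code_lo_def take_Suc_conv_app_nth)

lemma code_hi_Suc: "i < length ps \<Longrightarrow> code_hi ps k (Suc i) = code_hi ps k i - int (fst (ps ! i))"
  by (simp add: code_hi_def take_Suc_conv_app_nth)

lemma code_lo_length: "code_lo ps (length ps) = int (sum_list (map snd ps))"
  by (simp add: code_lo_def)

lemma code_hi_length: "code_hi ps k (length ps) = int (sum_list (map snd ps) + k)"
  by (simp add: code_hi_def)

lemma bu_profile_code: "bu_profile (Suc (length ps)) (code_lo ps) (code_hi ps k)"
  by (simp add: bu_profile_def code_lo_length code_hi_length code_lo_Suc code_hi_Suc)

lemma poly_of_code_in_CPbu_classes: "poly_of_code p \<in> CPbu_classes"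
  by (simp add: poly_of_code_def colpoly_in_CPbu_classes bu_profile_code split: prod.split)

lemma code_of_profile_code: "code_of_profile (Suc (length ps)) (code_lo ps) (code_hi ps k)
    = (ps, k)"
proof -
  have "map (\<lambda>i. (nat (code_hi ps k i - code_hi ps k (Suc i)),
      nat (code_lo ps (Suc i) - code_lo ps i)))
      [0..<length ps] = ps"
    by (rule nth_equalityI) (simp_all add: code_lo_Suc code_hi_Suc)
  then show ?thesis
    by (simp add: code_of_profile_def code_lo_length code_hi_length)
qed

lemma code_of_profile_cong:
  assumes "0 < v" "\<And>i. i < v \<Longrightarrow> lo i = lo' i \<and> hi i = hi' i"
  shows "code_of_profile v lo hi = code_of_profile v lo' hi'"
  using assms by (auto simp: code_of_profile_def)

lemma code_of_poly_of_code: "code_of_poly (poly_of_code p) = p"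
proof -
  obtain ps k where p: "p = (ps, k)" by force
  have "code_of_poly (poly_of_code p) =
      code_of_profile (Suc (length ps)) (code_lo ps) (code_hi ps k)"
    unfolding code_of_poly_def p poly_of_code_def
    using bu_profile_code vcols_colpoly utop_colpoly bbot_colpoly
    by (auto intro: code_of_profile_cong)
  then show ?thesis
    by (simp add: p code_of_profile_code)
qed

lemma int_sum_list_telescope:
  assumes "\<And>j. j < i \<Longrightarrow> f j \<le> f (Suc j)"
  shows "int (sum_list (map (\<lambda>j. nat (f (Suc j) - f j)) [0..<i])) = f i - f 0"
  using assms by (induction i) auto

lemma poly_of_code_of_profile:
  assumes profile: "bu_profile v lo hi"
  shows "poly_of_code (code_of_profile v lo hi) = colpoly v lo hi"
proof -
  define ps where "ps = map (\<lambda>i. (nat (hi i - hi (Suc i)), nat (lo (Suc i) - lo i))) [0..<v - 1]"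
  define k where "k = nat (hi (v - 1) - lo (v - 1))"
  have v: "Suc (length ps) = v"
    using profile by (simp add: ps_def bu_profile_def)
  have mono: "lo j \<le> lo (Suc j) \<and> hi (Suc j) \<le> hi j" if "j < v - 1" for j
    using profile that by (simp add: bu_profile_def)
  have lo: "code_lo ps i = lo i" if "i < v" for i
  proof -
    have "take i (map snd ps) = map (\<lambda>j. nat (lo (Suc j) - lo j)) [0..<i]"
      using that by (simp add: ps_def take_map take_upt)
    then show ?thesis
      using int_sum_list_telescope[of i lo] mono that profile
        by (simp add: code_lo_def bu_profile_def)
  qed
  have hi_drop: "int (sum_list (take i (map fst ps))) = hi 0 - hi i" if "i < v" for i
  proof -
    have "take i (map fst ps) = map (\<lambda>j. nat ((- hi) (Suc j) - (- hi) j)) [0..<i]"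
      using that by (simp add: ps_def take_map take_upt)
    then show ?thesis
      using int_sum_list_telescope[of i "- hi"] mono that by simp
  qed
  have "hi i = code_hi ps k i" if "i < v" for i
    using hi_drop[OF that] hi_drop[of "v - 1"] lo[of "v - 1"] v profile
    by (auto simp: code_hi_def code_lo_def k_def bu_profile_def)
  then show ?thesis
    unfolding code_of_profile_def poly_of_code_def ps_def[symmetric] k_def[symmetric]
    using v lo by (auto intro: colpoly_cong)
qed

lemma poly_of_code_of_poly: "P \<in> CPbu_classes \<Longrightarrow> poly_of_code (code_of_poly P) = P"
  unfolding code_of_poly_def
  by (simp add: poly_of_code_of_profile bu_profile_CPbu_classes CPbu_classes_eq_colpoly[symmetric])

lemma sum_lessThan_length_nth: "(\<Sum>i<length xs. f (xs ! i)) = sum_list (map f xs)"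
  by (simp add: sum_list_sum_nth atLeast0LessThan)

lemma
  fixes ps :: "(nat \<times> nat) list" and k :: nat
  defines "n \<equiv> sum_list (map fst ps) + sum_list (map snd ps) + k"
  shows vcols_poly_of_code: "vcols (poly_of_code (ps, k)) = Suc (length ps)"
    and hrows_poly_of_code: "hrows (poly_of_code (ps, k)) = Suc n"
    and cfirst_poly_of_code: "cfirst (poly_of_code (ps, k)) = n"
    and operim_poly_of_code: "operim (poly_of_code (ps, k)) =
      n + k + 4 + sum_list (map (\<lambda>p. max 1 (fst p)) ps) + sum_list (map (\<lambda>p. max 1 (snd p)) ps)"
proof -
  note profile = bu_profile_code[of ps k]
  show "vcols (poly_of_code (ps, k)) = Suc (length ps)"
    by (simp add: poly_of_code_def vcols_colpoly[OF profile])
  show "hrows (poly_of_code (ps, k)) = Suc n"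
    by (simp add: poly_of_code_def hrows_colpoly[OF profile] n_def)
  show "cfirst (poly_of_code (ps, k)) = n"
    by (simp add: poly_of_code_def cfirst_colpoly[OF profile] n_def)
  have top: "(\<Sum>x<Suc (length ps). max 1 (code_hi ps k (x - 1) - code_hi ps k x)) =
      1 + int (sum_list (map (\<lambda>p. max 1 (fst p)) ps))"
    by (subst sum.lessThan_Suc_shift)
      (simp add: code_hi_Suc of_nat_sum sum_lessThan_length_nth[symmetric] o_def of_nat_max)
  have bottom: "(\<Sum>x<Suc (length ps). max 1 (code_lo ps x - code_lo ps (x - 1))) =
      1 + int (sum_list (map (\<lambda>p. max 1 (snd p)) ps))"
    by (subst sum.lessThan_Suc_shift)
      (simp add: code_lo_Suc of_nat_sum sum_lessThan_length_nth[symmetric] o_def of_nat_max)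
  have "int (operim (poly_of_code (ps, k))) = int (n + k + 4 + sum_list (map (\<lambda>p. max 1 (fst p)) ps)
      + sum_list (map (\<lambda>p. max 1 (snd p)) ps))"
    using operim_colpoly[OF profile] top bottom
    by (simp add: poly_of_code_def code_hi_length code_lo_length n_def)
  then show "operim (poly_of_code (ps, k)) =
      n + k + 4 + sum_list (map (\<lambda>p. max 1 (fst p)) ps) + sum_list (map (\<lambda>p. max 1 (snd p)) ps)"
    by (simp only: of_nat_eq_iff)
qed

section \<open>The generating function\<close>

definition step_weight :: "real \<Rightarrow> real \<Rightarrow> real \<Rightarrow> nat \<Rightarrow> real" where
  "step_weight q y z a = (q * y * z) ^ a * q ^ max 1 a"

definition step_gf :: "real \<Rightarrow> real \<Rightarrow> real \<Rightarrow> real" where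
  "step_gf q y z = q + q^2 * y * z / (1 - q^2 * y * z)"

definition code_weight :: "real \<Rightarrow> real \<Rightarrow> real \<Rightarrow> real \<Rightarrow> (nat \<times> nat) list \<times> nat \<Rightarrow> real" where
  "code_weight x q y z = (\<lambda>(ps, k). x * q^4 * y *
     prod_list (map (\<lambda>(a, b). x * step_weight q y z a * step_weight q y z b) ps)
      * (q^2 * y * z) ^ k)"

lemma abs_step_weight: "\<bar>step_weight q y z a\<bar> = step_weight \<bar>q\<bar> \<bar>y\<bar> \<bar>z\<bar> a"
  by (simp add: step_weight_def abs_mult power_abs)

lemma has_sum_step_weight:
  assumes "\<bar>q^2 * y * z\<bar> < 1"
  shows "(step_weight q y z has_sum step_gf q y z) UNIV"
proof -
  have "(step_weight q y z has_sum q) {0}"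
    using has_sum_finite[of "{0}" "step_weight q y z"] by (simp add: step_weight_def)
  moreover have "(step_weight q y z has_sum q^2 * y * z / (1 - q^2 * y * z)) {1..}"
  proof (rule has_sum_cong[THEN iffD1, OF _ has_sum_geometric_from_1])
    show "(q^2 * y * z) ^ a = step_weight q y z a" if "a \<in> {1..}" for a
      using that by (simp add: step_weight_def max_def power_mult_distrib power2_eq_square mult_ac)
  qed (use assms in simp)
  ultimately have "(step_weight q y z has_sum step_gf q y z) ({0} \<union> {1..})"
    unfolding step_gf_def by (intro has_sum_Un_disjoint) auto
  moreover have "{0} \<union> {1..} = (UNIV :: nat set)"
    by auto
  ultimately show ?thesis
    by simp
qed

lemma has_sum_step_weight_pair:
  assumes "\<bar>q^2 * y * z\<bar> < 1"
  shows "((\<lambda>(a, b). x * step_weight q y z a * step_weight q y z b)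
      has_sum x * step_gf q y z ^ 2) UNIV"
proof -
  have abs: "\<bar>\<bar>q\<bar>^2 * \<bar>y\<bar> * \<bar>z\<bar>\<bar> < 1"
    using assms by (simp add: abs_mult power_abs)
  have "((\<lambda>(a, b). (x * step_weight q y z a) * step_weight q y z b) has_sum
      (x * step_gf q y z) * step_gf q y z) (UNIV \<times> UNIV)"
  proof (rule has_sum_Times_mult)
    show "((\<lambda>a. norm (x * step_weight q y z a)) has_sum \<bar>x\<bar> * step_gf \<bar>q\<bar> \<bar>y\<bar> \<bar>z\<bar>) UNIV"
      using has_sum_cmult_right[OF has_sum_step_weight[OF abs]]
        by (simp add: abs_mult abs_step_weight)
    show "((\<lambda>b. norm (step_weight q y z b)) has_sum step_gf \<bar>q\<bar> \<bar>y\<bar> \<bar>z\<bar>) UNIV"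
      using has_sum_step_weight[OF abs] by (simp add: abs_step_weight)
  qed (intro has_sum_cmult_right has_sum_step_weight assms)+
  then show ?thesis
    by (simp add: power2_eq_square mult_ac)
qed

lemma has_sum_code_weight:
  assumes t: "\<bar>q^2 * y * z\<bar> < 1" and small: "\<bar>x\<bar> * step_gf \<bar>q\<bar> \<bar>y\<bar> \<bar>z\<bar> ^ 2 < 1"
  shows "(code_weight x q y z has_sum
      x * q^4 * y * (1 / (1 - x * step_gf q y z ^ 2)) * (1 / (1 - q^2 * y * z))) UNIV"
proof -
  let ?pair = "\<lambda>(a, b). x * step_weight q y z a * step_weight q y z b"
  have abs: "\<bar>\<bar>q\<bar>^2 * \<bar>y\<bar> * \<bar>z\<bar>\<bar> < 1"
    using t by (simp add: abs_mult power_abs)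
  have pair_abs: "((\<lambda>p. \<bar>?pair p\<bar>) has_sum \<bar>x\<bar> * step_gf \<bar>q\<bar> \<bar>y\<bar> \<bar>z\<bar> ^ 2) UNIV"
    using has_sum_step_weight_pair[OF abs, of "\<bar>x\<bar>"]
      by (simp add: abs_mult abs_step_weight case_prod_unfold)
  have lists: "((\<lambda>ps. prod_list (map ?pair ps)) has_sum 1 / (1 - x * step_gf q y z ^ 2)) UNIV"
    using has_sum_prod_list[OF has_sum_step_weight_pair[OF t] pair_abs small] by simp
  have lists_abs: "((\<lambda>ps. \<bar>prod_list (map ?pair ps)\<bar>) has_sum
      1 / (1 - \<bar>x\<bar> * step_gf \<bar>q\<bar> \<bar>y\<bar> \<bar>z\<bar> ^ 2)) UNIV"
    using has_sum_prod_list[OF pair_abs _ small] pair_abs by (simp add: abs_prod_list)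
  have "((\<lambda>(ps, k). (x * q^4 * y * prod_list (map ?pair ps)) * (q^2 * y * z) ^ k) has_sum
      (x * q^4 * y * (1 / (1 - x * step_gf q y z ^ 2))) * (1 / (1 - q^2 * y * z))) (UNIV \<times> UNIV)"
  proof (rule has_sum_Times_mult)
    show "((\<lambda>ps. norm (x * q^4 * y * prod_list (map ?pair ps))) has_sum
        \<bar>x * q^4 * y\<bar> * (1 / (1 - \<bar>x\<bar> * step_gf \<bar>q\<bar> \<bar>y\<bar> \<bar>z\<bar> ^ 2))) UNIV"
      using has_sum_cmult_right[OF lists_abs] by (simp add: abs_mult)
    show "((\<lambda>k. norm ((q^2 * y * z) ^ k)) has_sum 1 / (1 - \<bar>q^2 * y * z\<bar>)) UNIV"
      using has_sum_geometric[of "\<bar>q^2 * y * z\<bar>"] t by (simp add: power_abs)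
  qed (use has_sum_cmult_right[OF lists] has_sum_geometric[of "q^2 * y * z"] t in auto)
  then show ?thesis
    by (simp add: code_weight_def case_prod_unfold)
qed

lemma prod_list_step_weight_pairs:
  "prod_list (map (\<lambda>(a, b). x * step_weight q y z a * step_weight q y z b) ps) =
     x ^ length ps * (q * y * z) ^ (sum_list (map fst ps) + sum_list (map snd ps)) *
     q ^ (sum_list (map (\<lambda>p. max 1 (fst p)) ps) + sum_list (map (\<lambda>p. max 1 (snd p)) ps))"
  by (induction ps) (auto simp: step_weight_def power_add mult_ac)

lemma weight_poly_of_code:
  "x ^ vcols (poly_of_code p) * y ^ hrows (poly_of_code p) * q ^ operim (poly_of_code p) *
     z ^ cfirst (poly_of_code p) = code_weight x q y z p"
proof -
  obtain ps k where p: "p = (ps, k)" by force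
  define s where "s = sum_list (map fst ps) + sum_list (map snd ps)"
  define m where "m = sum_list (map (\<lambda>p. max 1 (fst p)) ps) + sum_list (map (\<lambda>p. max 1 (snd p)) ps)"
  have "x ^ Suc (length ps) * y ^ Suc (s + k) * q ^ (s + k + k + 4 + m) * z ^ (s + k) =
      x * q^4 * y * (x ^ length ps * (q * y * z) ^ s * q ^ m) * (q^2 * y * z) ^ k"
    by (simp add: power_add power_mult_distrib power_mult[symmetric] mult_ac)
  then show ?thesis
    by (simp add: p vcols_poly_of_code hrows_poly_of_code cfirst_poly_of_code operim_poly_of_code
        code_weight_def prod_list_step_weight_pairs s_def m_def add.assoc)
qed

lemma code_weight_sum_closed_form:
  fixes x y q z :: real
  defines "t \<equiv> q^2 * y * z"
  assumes "t \<noteq> 1"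
  shows "x * q^4 * y * (1 / (1 - x * step_gf q y z ^ 2)) * (1 / (1 - t)) =
    q^4 * x * y * (1 - t) / ((1 - t)^2 - q^2 * (1 + q * y * z - t)^2 * x)"
proof -
  define D where "D = (1 - t)^2 - q^2 * (1 + q * y * z - t)^2 * x"
  have "1 - t \<noteq> 0"
    using assms(2) by simp
  have "step_gf q y z = q * (1 + q * y * z - t) / (1 - t)"
    using \<open>1 - t \<noteq> 0\<close> unfolding step_gf_def t_def[symmetric]
    by (simp add: field_simps) (simp add: t_def power2_eq_square algebra_simps)
  then have "1 - x * step_gf q y z ^ 2 = 1 - x * (q^2 * (1 + q * y * z - t)^2) / (1 - t)^2"
    by (simp add: power_divide power_mult_distrib)
  also have "\<dots> = D / (1 - t)^2"
    using \<open>1 - t \<noteq> 0\<close> by (simp add: D_def field_simps)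
  finally have denominator: "1 - x * step_gf q y z ^ 2 = D / (1 - t)^2" .
  show ?thesis
    unfolding denominator D_def[symmetric]
    using \<open>1 - t \<noteq> 0\<close> by (cases "D = 0") (simp_all add: field_simps power2_eq_square)
qed

lemma small_parameters_convergence:
  fixes x y q z :: real
  assumes "\<bar>x\<bar> < 1/8" "\<bar>y\<bar> < 1/8" "\<bar>q\<bar> < 1/8" "\<bar>z\<bar> < 1/8"
  shows "\<bar>q^2 * y * z\<bar> < 1" "\<bar>x\<bar> * step_gf \<bar>q\<bar> \<bar>y\<bar> \<bar>z\<bar> ^ 2 < 1"
proof -
  define a where "a = \<bar>q\<bar>^2 * \<bar>y\<bar> * \<bar>z\<bar>"
  have "\<bar>q\<bar> * \<bar>y\<bar> * \<bar>z\<bar> \<le> 1"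
    using assms by (intro mult_le_one) auto
  then have "\<bar>q\<bar> * (\<bar>q\<bar> * \<bar>y\<bar> * \<bar>z\<bar>) \<le> \<bar>q\<bar>"
    by (intro mult_left_le) auto
  then have "a < 1/8"
    using assms(3) by (simp add: a_def power2_eq_square mult_ac)
  then show "\<bar>q^2 * y * z\<bar> < 1"
    by (simp add: a_def abs_mult power_abs)
  have "0 \<le> a"
    by (simp add: a_def)
  have "0 \<le> a / (1 - a)" "a / (1 - a) \<le> 1/7"
    using \<open>0 \<le> a\<close> \<open>a < 1/8\<close> by (simp_all add: pos_divide_le_eq)
  moreover have "step_gf \<bar>q\<bar> \<bar>y\<bar> \<bar>z\<bar> = \<bar>q\<bar> + a / (1 - a)"
    by (simp add: step_gf_def a_def)
  ultimately have "0 \<le> step_gf \<bar>q\<bar> \<bar>y\<bar> \<bar>z\<bar>" "step_gf \<bar>q\<bar> \<bar>y\<bar> \<bar>z\<bar> < 1"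
    using assms(3) by linarith+
  then have "step_gf \<bar>q\<bar> \<bar>y\<bar> \<bar>z\<bar> ^ 2 \<le> 1"
    by (simp add: power_le_one)
  then show "\<bar>x\<bar> * step_gf \<bar>q\<bar> \<bar>y\<bar> \<bar>z\<bar> ^ 2 < 1"
    using assms(1) mult_left_le[of "step_gf \<bar>q\<bar> \<bar>y\<bar> \<bar>z\<bar> ^ 2" "\<bar>x\<bar>"] by simp
qed

theorem lemma6p1:
  "\<exists>\<epsilon>>0. \<forall>x y q z :: real. \<bar>x\<bar> < \<epsilon> \<and> \<bar>y\<bar> < \<epsilon> \<and> \<bar>q\<bar> < \<epsilon> \<and> \<bar>z\<bar> < \<epsilon> \<longrightarrow>
     ((\<lambda>P. x ^ vcols P * y ^ hrows P * q ^ operim P * z ^ cfirst P) has_sum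
        (q^4 * x * y * (1 - q^2 * y * z) /
         ((1 - q^2 * y * z)^2 - q^2 * (1 + q * y * z - q^2 * y * z)^2 * x))) CPbu_classes"
proof (intro exI[of _ "1/8"] conjI allI impI)
  fix x y q z :: real
  assume "\<bar>x\<bar> < 1/8 \<and> \<bar>y\<bar> < 1/8 \<and> \<bar>q\<bar> < 1/8 \<and> \<bar>z\<bar> < 1/8"
  then have t: "\<bar>q^2 * y * z\<bar> < 1" and small: "\<bar>x\<bar> * step_gf \<bar>q\<bar> \<bar>y\<bar> \<bar>z\<bar> ^ 2 < 1"
    using small_parameters_convergence by auto
  have "(code_weight x q y z has_sum
      q^4 * x * y * (1 - q^2 * y * z) /
      ((1 - q^2 * y * z)^2 - q^2 * (1 + q * y * z - q^2 * y * z)^2 * x)) UNIV"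
    using has_sum_code_weight[OF t small] code_weight_sum_closed_form[of q y z x] t by simp
  moreover have "(code_weight x q y z has_sum s) UNIV \<longleftrightarrow>
      ((\<lambda>P. x ^ vcols P * y ^ hrows P * q ^ operim P * z ^ cfirst P) has_sum s) CPbu_classes" for s
    by (rule has_sum_reindex_bij_witness[where i = code_of_poly and j = poly_of_code])
      (simp_all add: code_of_poly_of_code poly_of_code_of_poly
        poly_of_code_in_CPbu_classes weight_poly_of_code)
  ultimately show "((\<lambda>P. x ^ vcols P * y ^ hrows P * q ^ operim P * z ^ cfirst P) has_sum
      (q^4 * x * y * (1 - q^2 * y * z) /
       ((1 - q^2 * y * z)^2 - q^2 * (1 + q * y * z - q^2 * y * z)^2 * x))) CPbu_classes"
    by blast
qed simp

end
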